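(* Consider the multi-user private information retrieval (MUPIR) setting with $N \ge 1$ non-curious or computationally-limited databases and $U \ge 1$ trustworthy users, with $K$ messages, and let $S = N + U - 1$ denote the number of information sources. Then the capacity (supremum of achievable rates under the privacy constraints) of this setting is $$C_{\text{MUPIR}} = \Big(1 + \frac{1}{S} + \frac{1}{S^2} + \cdots + \frac{1}{S^{K-1}}\Big)^{-1}.$$
   Context: Setting (MUPIR): $N$ replicated, non-communicating databases each store the same $K$ independent messages $W_1,\dots,W_K$, each of $L$ bits, so $H(W_k)=L$ for all $k\in[K]=\{1,\dots,K\}$ and $H(W_{1:K})=KL$. A central user wishes to retrieve $W_\theta$, $\theta\in[K]$, with the help of the other $U-1$ users. The $S=N+U-1$ sources are the $N$ databases and the $U-1$ other users. The central user generates queries $Q^{[\theta]}_s$, $s\in[S]$, one per source; a query sent to a database is answered directly by that database with $A^{[\theta]}_s$, while a query sent to another user is forwarded by that user to some database and the resulting answer $A^{[\theta]}_s$ is returned to the central user. Queries are independent of the messages: $I(Q^{[k]}_{1:S};W_{1:K})=0$ for all $k\in[K]$. Privacy: for every source $s$, $(Q^{[1]}_s,A^{[1]}_s,W_{1:K})$ and $(Q^{[k]}_s,A^{[k]}_s,W_{1:K})$ are identically distributed for every $k\in[K]$. Correctness: $W_\theta$ is recoverable from all answers and queries. Writing $\sum Q$ for $Q^{[\theta]}_{1:S}$, the rate is $R = L/D = H(W_\theta)/\big(S\,H(A^{[\theta]}_1 \mid \sum Q)\big)$, where $D$ is the total number of downloaded bits; upload cost is ignored. "Computationally-limited" means a database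 does not cross-reference the queries of different users (it analyzes only the queries of a single user at a time). *)

theory Defs
  imports "HOL-Probability.Probability_Mass_Function"
begin

definition ent :: "'a pmf \<Rightarrow> real" where
  "ent p = - (\<Sum>x\<in>set_pmf p. pmf p x * log 2 (pmf p x))"

definition cond_ent :: "'c pmf \<Rightarrow> ('c \<Rightarrow> 'a) \<Rightarrow> ('c \<Rightarrow> 'b) \<Rightarrow> real" where
  "cond_ent p X Y = ent (map_pmf (\<lambda>z. (X z, Y z)) p) - ent (map_pmf Y p)"

definition msg_set :: "nat \<Rightarrow> nat \<Rightarrow> bool list list set" where
  "msg_set K L = {w. length w = K \<and> (\<forall>k<K. length (w ! k) = L)}"

(* Messages are independent and uniform: H(W_k) = L, H(W_{1:K}) = K L. *)
definition msg_dist :: "nat \<Rightarrow> nat \<Rightarrow> bool list list pmf" where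
  "msg_dist K L = pmf_of_set (msg_set K L)"

(* Joint law of (queries, messages) when message theta is desired;
   queries are independent of the messages. Qd theta is the law of
   the query tuple (Q_s^[theta])_{s<S}, a list of length S. *)
definition joint :: "(nat \<Rightarrow> nat list pmf) \<Rightarrow> nat \<Rightarrow> nat \<Rightarrow> nat \<Rightarrow> (nat list \<times> bool list list) pmf" where
  "joint Qd K L \<theta> = pair_pmf (Qd \<theta>) (msg_dist K L)"

(* Answers: source s answers its own query q only (non-curious /
   computationally-limited databases: no cross-referencing of queries). *)
definition answers :: "nat \<Rightarrow> (nat \<Rightarrow> nat \<Rightarrow> bool list list \<Rightarrow> bool list) \<Rightarrow> nat list \<Rightarrow> bool list list \<Rightarrow> bool list list" where
  "answers S ans q w = map (\<lambda>s. ans s (q ! s) w) [0..<S]"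

definition mupir_scheme :: "nat \<Rightarrow> nat \<Rightarrow> nat \<Rightarrow> nat \<Rightarrow> (nat \<Rightarrow> nat list pmf)
    \<Rightarrow> (nat \<Rightarrow> nat \<Rightarrow> bool list list \<Rightarrow> bool list) \<Rightarrow> bool" where
  "mupir_scheme N U K L Qd ans \<longleftrightarrow>
     (let S = N + U - 1 in
       (\<forall>\<theta><K. finite (set_pmf (Qd \<theta>)) \<and> (\<forall>q\<in>set_pmf (Qd \<theta>). length q = S)) \<and>
       (\<comment> \<open>privacy at every source\<close>
        \<forall>s<S. \<forall>k<K.
          map_pmf (\<lambda>(q, w). (q ! s, ans s (q ! s) w, w)) (joint Qd K L 0) =
          map_pmf (\<lambda>(q, w). (q ! s, ans s (q ! s) w, w)) (joint Qd K L k)) \<and>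
       (\<comment> \<open>correctness (zero error)\<close>
        \<exists>dec. \<forall>\<theta><K. \<forall>q\<in>set_pmf (Qd \<theta>). \<forall>w\<in>msg_set K L.
          dec \<theta> q (answers S ans q w) = w ! \<theta>))"

definition download :: "nat \<Rightarrow> nat \<Rightarrow> nat \<Rightarrow> nat \<Rightarrow> (nat \<Rightarrow> nat list pmf)
    \<Rightarrow> (nat \<Rightarrow> nat \<Rightarrow> bool list list \<Rightarrow> bool list) \<Rightarrow> nat \<Rightarrow> real" where
  "download N U K L Qd ans \<theta> =
     (\<Sum>s<N + U - 1. cond_ent (joint Qd K L \<theta>) (\<lambda>(q, w). ans s (q ! s) w) (\<lambda>(q, w). q))"

definition mupir_rate :: "nat \<Rightarrow> nat \<Rightarrow> nat \<Rightarrow> nat \<Rightarrow> (nat \<Rightarrow> nat list pmf)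
    \<Rightarrow> (nat \<Rightarrow> nat \<Rightarrow> bool list list \<Rightarrow> bool list) \<Rightarrow> real" where
  "mupir_rate N U K L Qd ans =
     real L / (MAX \<theta>\<in>{..<K}. download N U K L Qd ans \<theta>)"

definition mupir_capacity :: "nat \<Rightarrow> nat \<Rightarrow> nat \<Rightarrow> real" where
  "mupir_capacity N U K =
     Sup {mupir_rate N U K L Qd ans | L Qd ans. mupir_scheme N U K L Qd ans}"

end

(*
  Converse.  Let R j \<theta> = residual_ent j \<theta> be the entropy of all S answers given the queries
  and the first j messages when W\<^sub>\<theta> is desired.  Since W\<^sub>k is decoded from answers and
  queries, R k k = L + R (k + 1) k.  A single source cannot tell whether k or k + 1 is desired, and
  its answer depends on the queries only through its own one, which is independent of the
  messages; with subadditivity this gives R (k + 1) (k + 1) \<le> S * R (k + 1) k.  Iterating from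
  k = K - 1 down to 0 yields D \<ge> R 0 0 \<ge> L (1 + 1/S + ... + 1/S^(K-1)).

  Achievability.  For S \<ge> 2 take L = S - 1 and a uniform digit vector f \<in> {0..S-1}^K; source n
  gets f with the digit at \<theta> shifted by n mod S and returns the parity of the bits its digits
  select.  Every single query is uniform whatever \<theta> is; the source whose digit at \<theta> is 0
  returns the interference and every other one the interference plus one bit of W\<^sub>\<theta>.  An
  answer is a fair coin unless its digit vector is zero, so D = S (1 - S^-K), and L / D is the
  claimed value.  For S = 1 the user simply downloads everything.
*)
theory Submission
  imports Defs "HOL-Library.Nat_Bijection"
begin

section \<open>Entropy of random variables on finite distributions\<close>

definition ent_rv :: "'a pmf \<Rightarrow> ('a \<Rightarrow> 'b) \<Rightarrow> real" where
  "ent_rv p X = ent (map_pmf X p)"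

lemma cond_ent_ent_rv: "cond_ent p X Y = ent_rv p (\<lambda>z. (X z, Y z)) - ent_rv p Y"
  unfolding cond_ent_def ent_rv_def ..

lemma pmf_map_pmf_finite:
  assumes "finite (set_pmf p)"
  shows "pmf (map_pmf f p) b = (\<Sum>\<omega>\<in>{\<omega>\<in>set_pmf p. f \<omega> = b}. pmf p \<omega>)"
proof -
  have "pmf (map_pmf f p) b = measure p (f -` {b} \<inter> set_pmf p)"
    by (simp add: pmf_map measure_Int_set_pmf)
  also have "\<dots> = sum (pmf p) (f -` {b} \<inter> set_pmf p)"
    using assms by (simp add: measure_measure_pmf_finite)
  also have "f -` {b} \<inter> set_pmf p = {\<omega>\<in>set_pmf p. f \<omega> = b}" by auto
  finally show ?thesis .
qed

lemma sum_set_pmf_map_pmf: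
  assumes fin: "finite (set_pmf p)"
  shows "(\<Sum>b\<in>set_pmf (map_pmf f p). pmf (map_pmf f p) b * g b)
       = (\<Sum>\<omega>\<in>set_pmf p. pmf p \<omega> * g (f \<omega>))"
proof -
  have "(\<Sum>\<omega>\<in>set_pmf p. pmf p \<omega> * g (f \<omega>))
      = (\<Sum>b\<in>f ` set_pmf p. \<Sum>\<omega>\<in>{\<omega>\<in>set_pmf p. f \<omega> = b}. pmf p \<omega> * g (f \<omega>))"
    by (rule sum.image_gen[OF fin])
  also have "\<dots> = (\<Sum>b\<in>f ` set_pmf p. \<Sum>\<omega>\<in>{\<omega>\<in>set_pmf p. f \<omega> = b}. pmf p \<omega> * g b)"
    by (intro sum.cong) auto
  finally show ?thesis
    by (simp add: pmf_map_pmf_finite[OF fin] sum_distrib_right)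
qed

lemma ent_rv_expectation:
  assumes "finite (set_pmf p)"
  shows "ent_rv p X = - (\<Sum>\<omega>\<in>set_pmf p. pmf p \<omega> * log 2 (pmf (map_pmf X p) (X \<omega>)))"
  using sum_set_pmf_map_pmf[OF assms, of X "\<lambda>b. log 2 (pmf (map_pmf X p) b)"]
  unfolding ent_rv_def ent_def by simp

lemma pmf_map_pmf_pos: "\<omega> \<in> set_pmf p \<Longrightarrow> pmf (map_pmf f p) (f \<omega>) > 0"
  by (simp add: pmf_positive)

lemma ent_rv_mono:
  assumes fin: "finite (set_pmf p)"
    and det: "\<And>z z'. z \<in> set_pmf p \<Longrightarrow> z' \<in> set_pmf p \<Longrightarrow> G z = G z' \<Longrightarrow> F z = F z'"
  shows "ent_rv p F \<le> ent_rv p G"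
proof -
  have "pmf p \<omega> * log 2 (pmf (map_pmf G p) (G \<omega>)) \<le> pmf p \<omega> * log 2 (pmf (map_pmf F p) (F \<omega>))"
    if \<omega>: "\<omega> \<in> set_pmf p" for \<omega>
  proof -
    have "{z \<in> set_pmf p. G z = G \<omega>} \<subseteq> {z \<in> set_pmf p. F z = F \<omega>}"
      using det \<omega> by blast
    then have "pmf (map_pmf G p) (G \<omega>) \<le> pmf (map_pmf F p) (F \<omega>)"
      unfolding pmf_map_pmf_finite[OF fin] using fin by (intro sum_mono2) auto
    then show ?thesis
      using pmf_map_pmf_pos[OF \<omega>, of G] by (intro mult_left_mono) auto
  qed
  then show ?thesis unfolding ent_rv_expectation[OF fin] by (simp add: sum_mono)
qed

lemma ent_rv_eq:
  assumes "finite (set_pmf p)"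
    and "\<And>z z'. z \<in> set_pmf p \<Longrightarrow> z' \<in> set_pmf p \<Longrightarrow> G z = G z' \<longleftrightarrow> F z = F z'"
  shows "ent_rv p F = ent_rv p G"
  using ent_rv_mono[OF assms(1), of G F] ent_rv_mono[OF assms(1), of F G] assms(2)
  by (auto intro: antisym)

lemma ent_rv_cong:
  "(\<And>z. z \<in> set_pmf p \<Longrightarrow> F z = G z) \<Longrightarrow> ent_rv p F = ent_rv p G"
  unfolding ent_rv_def by (simp cong: map_pmf_cong)

lemma ent_rv_map_pmf: "ent_rv (map_pmf t p) F = ent_rv p (\<lambda>z. F (t z))"
  unfolding ent_rv_def by (simp add: map_pmf_comp)

lemma ent_pair_pmf:
  assumes fA: "finite (set_pmf A)" and fB: "finite (set_pmf B)"
  shows "ent (pair_pmf A B) = ent A + ent B"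
proof -
  have sA: "sum (pmf A) (set_pmf A) = 1" and sB: "sum (pmf B) (set_pmf B) = 1"
    using fA fB by (auto intro: sum_pmf_eq_1)
  have "(\<Sum>x\<in>set_pmf (pair_pmf A B). pmf (pair_pmf A B) x * log 2 (pmf (pair_pmf A B) x))
     = (\<Sum>(a, b)\<in>set_pmf A \<times> set_pmf B. pmf A a * pmf B b * log 2 (pmf A a * pmf B b))"
    unfolding set_pair_pmf by (rule sum.cong) (auto simp: pmf_pair)
  also have "\<dots> = (\<Sum>a\<in>set_pmf A. \<Sum>b\<in>set_pmf B. pmf A a * pmf B b * log 2 (pmf A a * pmf B b))"
    by (simp add: sum.cartesian_product)
  also have "\<dots> = (\<Sum>a\<in>set_pmf A. \<Sum>b\<in>set_pmf B. pmf B b * (pmf A a * log 2 (pmf A a))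
                      + pmf A a * (pmf B b * log 2 (pmf B b)))"
    by (intro sum.cong refl) (auto simp: log_mult pmf_positive algebra_simps)
  also have "\<dots> = (\<Sum>a\<in>set_pmf A. pmf A a * log 2 (pmf A a))
                 + (\<Sum>b\<in>set_pmf B. pmf B b * log 2 (pmf B b))"
    by (simp add: sum.distrib sum_distrib_left[symmetric] sum_distrib_right[symmetric] sA sB)
  finally show ?thesis unfolding ent_def by simp
qed

lemma ent_rv_pair_pmf:
  assumes "finite (set_pmf A)" "finite (set_pmf B)"
  shows "ent_rv (pair_pmf A B) (\<lambda>z. (f (fst z), g (snd z))) = ent_rv A f + ent_rv B g"
proof -
  have "(\<lambda>z. (f (fst z), g (snd z))) = (\<lambda>(a, b). (f a, g b))" by auto
  then show ?thesis unfolding ent_rv_def using assms by (simp add: map_pair ent_pair_pmf)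
qed

lemma gibbs_inequality:
  assumes fin: "finite (set_pmf p)" and pos: "\<And>x. x \<in> set_pmf p \<Longrightarrow> Q x > 0"
    and le1: "sum Q (set_pmf p) \<le> 1"
  shows "(\<Sum>x\<in>set_pmf p. pmf p x * log 2 (Q x / pmf p x)) \<le> 0"
proof -
  have "(\<Sum>x\<in>set_pmf p. pmf p x * log 2 (Q x / pmf p x))
      \<le> (\<Sum>x\<in>set_pmf p. (Q x - pmf p x) / ln 2)"
  proof (rule sum_mono)
    fix x assume x: "x \<in> set_pmf p"
    have px: "pmf p x > 0" using x by (simp add: pmf_positive)
    have "log 2 (Q x / pmf p x) \<le> (Q x / pmf p x - 1) / ln 2"
      using ln_le_minus_one[of "Q x / pmf p x"] pos[OF x] px
      by (simp add: log_def divide_right_mono)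
    then have "pmf p x * log 2 (Q x / pmf p x) \<le> pmf p x * ((Q x / pmf p x - 1) / ln 2)"
      using px by (intro mult_left_mono) auto
    also have "\<dots> = (Q x - pmf p x) / ln 2" using px by (simp add: field_simps)
    finally show "pmf p x * log 2 (Q x / pmf p x) \<le> (Q x - pmf p x) / ln 2" .
  qed
  also have "\<dots> = (sum Q (set_pmf p) - 1) / ln 2"
    using fin by (simp add: sum_divide_distrib[symmetric] sum_subtractf sum_pmf_eq_1)
  also have "\<dots> \<le> 0" using le1 by (intro divide_nonpos_pos) auto
  finally show ?thesis .
qed

lemma sum_pmf_eq_pmf_map_snd:
  assumes fin: "finite (set_pmf m)" and "finite A" and "fst ` set_pmf m \<subseteq> A"
  shows "(\<Sum>x\<in>A. pmf m (x, z)) = pmf (map_pmf snd m) z"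
proof -
  have "pmf (map_pmf snd m) z = (\<Sum>\<omega>\<in>{\<omega>\<in>set_pmf m. snd \<omega> = z}. pmf m \<omega>)"
    by (rule pmf_map_pmf_finite[OF fin])
  also have "{\<omega>\<in>set_pmf m. snd \<omega> = z} = (\<lambda>x. (x, z)) ` {x\<in>A. (x, z) \<in> set_pmf m}"
    using assms(3) by force
  also have "(\<Sum>\<omega>\<in>(\<lambda>x. (x, z)) ` {x\<in>A. (x, z) \<in> set_pmf m}. pmf m \<omega>)
      = (\<Sum>x\<in>{x\<in>A. (x, z) \<in> set_pmf m}. pmf m (x, z))"
    by (subst sum.reindex) (auto simp: inj_on_def)
  also have "\<dots> = (\<Sum>x\<in>A. pmf m (x, z))"
    using assms(2) by (intro sum.mono_neutral_left) (auto simp: set_pmf_eq)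
  finally show ?thesis by simp
qed

lemma sum_markov_product_le_1:
  fixes r :: "('x \<times> 'y \<times> 'z) pmf"
  defines "rxz \<equiv> map_pmf (\<lambda>t. (fst t, snd (snd t))) r"
    and "ryz \<equiv> map_pmf (\<lambda>t. (fst (snd t), snd (snd t))) r"
    and "rz \<equiv> map_pmf (\<lambda>t. snd (snd t)) r"
  assumes fin: "finite (set_pmf r)"
  shows "(\<Sum>t\<in>set_pmf r. pmf rxz (fst t, snd (snd t)) * pmf ryz (fst (snd t), snd (snd t))
           / pmf rz (snd (snd t))) \<le> 1"
proof -
  define Xs where "Xs = fst ` set_pmf r"
  define Ys where "Ys = (\<lambda>t. fst (snd t)) ` set_pmf r"
  define Zs where "Zs = (\<lambda>t. snd (snd t)) ` set_pmf r"
  have fins: "finite Xs" "finite Ys" "finite Zs"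
    using fin by (auto simp: Xs_def Ys_def Zs_def)
  define Q where "Q t = pmf rxz (fst t, snd (snd t)) * pmf ryz (fst (snd t), snd (snd t))
      / pmf rz (snd (snd t))" for t
  have rz_xz: "rz = map_pmf snd rxz" and rz_yz: "rz = map_pmf snd ryz"
    unfolding rz_def rxz_def ryz_def by (simp_all add: map_pmf_comp)
  have sx: "(\<Sum>x\<in>Xs. pmf rxz (x, z)) = pmf rz z" for z
    unfolding rz_xz using fin fins by (intro sum_pmf_eq_pmf_map_snd) (force simp: rxz_def Xs_def)+
  have sy: "(\<Sum>y\<in>Ys. pmf ryz (y, z)) = pmf rz z" for z
    unfolding rz_yz using fin fins by (intro sum_pmf_eq_pmf_map_snd) (force simp: ryz_def Ys_def)+
  have sz: "(\<Sum>z\<in>Zs. pmf rz z) = 1"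
    using fins by (intro sum_pmf_eq_1) (auto simp: rz_def Zs_def)
  have "sum Q (set_pmf r) \<le> sum Q (Xs \<times> (Ys \<times> Zs))"
    using fins by (intro sum_mono2) (simp, force simp: Xs_def Ys_def Zs_def, simp add: Q_def)
  also have "\<dots> = (\<Sum>x\<in>Xs. \<Sum>y\<in>Ys. \<Sum>z\<in>Zs. Q (x, y, z))"
    by (simp add: sum.cartesian_product)
  also have "\<dots> = (\<Sum>z\<in>Zs. \<Sum>x\<in>Xs. \<Sum>y\<in>Ys. Q (x, y, z))"
    by (subst sum.swap) (simp add: sum.swap[of _ Ys])
  also have "\<dots> = (\<Sum>z\<in>Zs. (\<Sum>x\<in>Xs. pmf rxz (x, z)) * (\<Sum>y\<in>Ys. pmf ryz (y, z)) / pmf rz z)"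
    by (simp add: Q_def sum_product sum_divide_distrib)
  also have "\<dots> = 1"
    using sz by (simp add: sx sy)
  finally show ?thesis unfolding Q_def .
qed

text \<open>Gibbs' inequality against the law \<open>p(x,z) p(y,z) / p(z)\<close>, under which the first two
  components are conditionally independent given the third.\<close>
lemma ent_rv_submodular_triple:
  fixes r :: "('x \<times> 'y \<times> 'z) pmf"
  assumes fin: "finite (set_pmf r)"
  shows "ent_rv r (\<lambda>t. t) + ent_rv r (\<lambda>t. snd (snd t))
       \<le> ent_rv r (\<lambda>t. (fst t, snd (snd t))) + ent_rv r (\<lambda>t. (fst (snd t), snd (snd t)))"
proof -
  define rxz where "rxz = map_pmf (\<lambda>t. (fst t, snd (snd t))) r"
  define ryz where "ryz = map_pmf (\<lambda>t. (fst (snd t), snd (snd t))) r"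
  define rz where "rz = map_pmf (\<lambda>t. snd (snd t)) r"
  define Q where "Q t = pmf rxz (fst t, snd (snd t)) * pmf ryz (fst (snd t), snd (snd t))
      / pmf rz (snd (snd t))" for t
  have pos: "pmf r t > 0" "pmf rxz (fst t, snd (snd t)) > 0"
      "pmf ryz (fst (snd t), snd (snd t)) > 0" "pmf rz (snd (snd t)) > 0"
    if "t \<in> set_pmf r" for t
    using that pmf_map_pmf_pos[OF that, of "\<lambda>t. (fst t, snd (snd t))"]
      pmf_map_pmf_pos[OF that, of "\<lambda>t. (fst (snd t), snd (snd t))"]
      pmf_map_pmf_pos[OF that, of "\<lambda>t. snd (snd t)"]
    unfolding rxz_def ryz_def rz_def by (auto simp: pmf_positive)
  have le0: "(\<Sum>t\<in>set_pmf r. pmf r t * log 2 (Q t / pmf r t)) \<le> 0"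
  proof (rule gibbs_inequality[OF fin])
    show "Q t > 0" if "t \<in> set_pmf r" for t
      using pos[OF that] by (simp add: Q_def)
    show "sum Q (set_pmf r) \<le> 1"
      using sum_markov_product_le_1[OF fin] unfolding Q_def rxz_def ryz_def rz_def .
  qed
  have "(\<Sum>t\<in>set_pmf r. pmf r t * log 2 (Q t / pmf r t))
      = (\<Sum>t\<in>set_pmf r. pmf r t * log 2 (pmf rxz (fst t, snd (snd t)))
            + pmf r t * log 2 (pmf ryz (fst (snd t), snd (snd t)))
            - pmf r t * log 2 (pmf rz (snd (snd t))) - pmf r t * log 2 (pmf r t))"
  proof (rule sum.cong[OF refl])
    fix t assume "t \<in> set_pmf r"
    note pos = pos[OF this]
    show "pmf r t * log 2 (Q t / pmf r t) = pmf r t * log 2 (pmf rxz (fst t, snd (snd t)))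
            + pmf r t * log 2 (pmf ryz (fst (snd t), snd (snd t)))
            - pmf r t * log 2 (pmf rz (snd (snd t))) - pmf r t * log 2 (pmf r t)"
      unfolding Q_def using pos by (simp add: log_mult log_divide algebra_simps)
  qed
  also have "\<dots> = ent_rv r (\<lambda>t. snd (snd t)) + ent_rv r (\<lambda>t. t)
      - ent_rv r (\<lambda>t. (fst t, snd (snd t))) - ent_rv r (\<lambda>t. (fst (snd t), snd (snd t)))"
    unfolding ent_rv_expectation[OF fin] rxz_def ryz_def rz_def
    by (simp only: sum.distrib sum_subtractf map_pmf_ident)
  finally show ?thesis using le0 by linarith
qed

lemma ent_rv_submodular:
  assumes "finite (set_pmf p)"
  shows "ent_rv p (\<lambda>z. (X z, Y z, Z z)) + ent_rv p Z
       \<le> ent_rv p (\<lambda>z. (X z, Z z)) + ent_rv p (\<lambda>z. (Y z, Z z))"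
proof -
  have "finite (set_pmf (map_pmf (\<lambda>z. (X z, Y z, Z z)) p))" using assms by simp
  from ent_rv_submodular_triple[OF this] show ?thesis
    by (simp only: ent_rv_map_pmf fst_conv snd_conv)
qed

lemma cond_ent_nonneg:
  assumes "finite (set_pmf p)"
  shows "cond_ent p X Y \<ge> 0"
proof -
  have "ent_rv p Y \<le> ent_rv p (\<lambda>z. (X z, Y z))"
    by (rule ent_rv_mono[OF assms]) simp
  then show ?thesis by (simp add: cond_ent_ent_rv)
qed

lemma cond_ent_mono_fun:
  assumes fin: "finite (set_pmf p)"
    and det: "\<And>z z'. z \<in> set_pmf p \<Longrightarrow> z' \<in> set_pmf p \<Longrightarrow> X' z = X' z' \<Longrightarrow> X z = X z'"
  shows "cond_ent p X Y \<le> cond_ent p X' Y"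
proof -
  have "ent_rv p (\<lambda>z. (X z, Y z)) \<le> ent_rv p (\<lambda>z. (X' z, Y z))"
    by (rule ent_rv_mono[OF fin]) (auto dest: det)
  then show ?thesis by (simp add: cond_ent_ent_rv)
qed

lemma cond_ent_mono_condition:
  assumes fin: "finite (set_pmf p)"
    and det: "\<And>z z'. z \<in> set_pmf p \<Longrightarrow> z' \<in> set_pmf p \<Longrightarrow> Y z = Y z' \<Longrightarrow> Y' z = Y' z'"
  shows "cond_ent p X Y \<le> cond_ent p X Y'"
proof -
  have "ent_rv p (\<lambda>z. (X z, Y z, Y' z)) = ent_rv p (\<lambda>z. (X z, Y z))"
    and "ent_rv p (\<lambda>z. (Y z, Y' z)) = ent_rv p Y"
    using det by (auto intro!: ent_rv_eq[OF fin])
  then show ?thesis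
    using ent_rv_submodular[OF fin, of X Y Y'] by (simp add: cond_ent_ent_rv)
qed

lemma cond_ent_map_pmf:
  "cond_ent (map_pmf t p) X Y = cond_ent p (\<lambda>z. X (t z)) (\<lambda>z. Y (t z))"
  by (simp add: cond_ent_ent_rv ent_rv_map_pmf)

lemma cond_ent_subadditive:
  assumes fin: "finite (set_pmf p)"
  shows "cond_ent p (\<lambda>z. map (\<lambda>s. A s z) [0..<m]) Y \<le> (\<Sum>s<m. cond_ent p (A s) Y)"
proof (induction m)
  case 0
  have "ent_rv p (\<lambda>z. (map (\<lambda>s. A s z) [0..<0], Y z)) = ent_rv p Y"
    by (rule ent_rv_eq[OF fin]) auto
  then show ?case by (simp add: cond_ent_ent_rv)
next
  case (Suc m)
  have "ent_rv p (\<lambda>z. (map (\<lambda>s. A s z) [0..<Suc m], Y z))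
      = ent_rv p (\<lambda>z. (A m z, map (\<lambda>s. A s z) [0..<m], Y z))"
    by (rule ent_rv_eq[OF fin]) auto
  then show ?case
    using Suc.IH ent_rv_submodular[OF fin, of "A m" "\<lambda>z. map (\<lambda>s. A s z) [0..<m]" Y]
    by (simp add: cond_ent_ent_rv)
qed

text \<open>The answer depends on the query only through \<open>h Q\<close>, and \<open>Q\<close> is independent of
  the messages.\<close>
lemma cond_ent_pair_pmf_local_query:
  assumes fP: "finite (set_pmf P)" and fM: "finite (set_pmf M)"
  shows "cond_ent (pair_pmf P M) (\<lambda>z. a (h (fst z)) (snd z)) (\<lambda>z. (T (snd z), h (fst z)))
       \<le> cond_ent (pair_pmf P M) (\<lambda>z. a (h (fst z)) (snd z)) (\<lambda>z. (T (snd z), fst z))"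
proof -
  define p where "p = pair_pmf P M"
  define V where "V z = (a (h (fst z)) (snd z), T (snd z), h (fst z))" for z
  have fin: "finite (set_pmf p)" using fP fM by (simp add: p_def)
  have indep: "ent_rv p (\<lambda>z. (f (fst z), g (snd z))) = ent_rv P f + ent_rv M g" for f g
    unfolding p_def by (rule ent_rv_pair_pmf[OF fP fM])
  have "ent_rv p (\<lambda>z. (snd z, fst z, V z)) = ent_rv p (\<lambda>z. (fst z, snd z))"
    and "ent_rv p (\<lambda>z. (snd z, V z)) = ent_rv p (\<lambda>z. (h (fst z), snd z))"
    and "ent_rv p (\<lambda>z. (fst z, V z)) = ent_rv p (\<lambda>z. (a (h (fst z)) (snd z), T (snd z), fst z))"
    and "ent_rv p (\<lambda>z. (T (snd z), fst z)) = ent_rv p (\<lambda>z. (fst z, T (snd z)))"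
    and "ent_rv p (\<lambda>z. (T (snd z), h (fst z))) = ent_rv p (\<lambda>z. (h (fst z), T (snd z)))"
    by (auto intro!: ent_rv_eq[OF fin] simp: V_def)
  then show ?thesis
    using ent_rv_submodular[OF fin, of snd fst V] indep[of "\<lambda>x. x" "\<lambda>x. x"] indep[of h "\<lambda>x. x"]
      indep[of "\<lambda>x. x" T] indep[of h T]
    unfolding p_def[symmetric] cond_ent_ent_rv V_def by simp
qed

lemma pmf_map_pmf_pair_pmf_fun:
  assumes fP: "finite (set_pmf P)" and fM: "finite (set_pmf M)" and q: "q \<in> set_pmf P"
  shows "pmf (map_pmf (\<lambda>z. (g (fst z) (snd z), fst z)) (pair_pmf P M)) (g q w, q)
       = pmf P q * pmf (map_pmf (g q) M) (g q w)"
proof -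
  have fin: "finite (set_pmf (pair_pmf P M))" using fP fM by simp
  have "{z\<in>set_pmf (pair_pmf P M). (g (fst z) (snd z), fst z) = (g q w, q)}
      = (\<lambda>w'. (q, w')) ` {w'\<in>set_pmf M. g q w' = g q w}"
    using q by auto
  then have "pmf (map_pmf (\<lambda>z. (g (fst z) (snd z), fst z)) (pair_pmf P M)) (g q w, q)
      = (\<Sum>z\<in>(\<lambda>w'. (q, w')) ` {w'\<in>set_pmf M. g q w' = g q w}. pmf (pair_pmf P M) z)"
    unfolding pmf_map_pmf_finite[OF fin] by simp
  also have "\<dots> = (\<Sum>w'\<in>{w'\<in>set_pmf M. g q w' = g q w}. pmf P q * pmf M w')"
    by (subst sum.reindex) (auto simp: inj_on_def pmf_pair)
  also have "\<dots> = pmf P q * pmf (map_pmf (g q) M) (g q w)"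
    by (simp add: pmf_map_pmf_finite[OF fM] sum_distrib_left)
  finally show ?thesis .
qed

lemma cond_ent_pair_pmf_fst:
  assumes fP: "finite (set_pmf P)" and fM: "finite (set_pmf M)"
  shows "cond_ent (pair_pmf P M) (\<lambda>z. g (fst z) (snd z)) fst
       = (\<Sum>q\<in>set_pmf P. pmf P q * ent (map_pmf (g q) M))"
proof -
  define p where "p = pair_pmf P M"
  have fin: "finite (set_pmf p)" using fP fM by (simp add: p_def)
  define R where "R = map_pmf (\<lambda>z. (g (fst z) (snd z), fst z)) p"
  have sM: "sum (pmf M) (set_pmf M) = 1" using fM by (rule sum_pmf_eq_1) auto
  have pR: "pmf R (g q w, q) = pmf P q * pmf (map_pmf (g q) M) (g q w)"
    if "q \<in> set_pmf P" for q w
    unfolding R_def p_def using fP fM that by (rule pmf_map_pmf_pair_pmf_fun)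
  have "ent_rv p (\<lambda>z. (g (fst z) (snd z), fst z))
      = - (\<Sum>q\<in>set_pmf P. \<Sum>w\<in>set_pmf M.
             pmf P q * pmf M w * log 2 (pmf P q * pmf (map_pmf (g q) M) (g q w)))"
  proof -
    have "(\<Sum>\<omega>\<in>set_pmf p. pmf p \<omega> * log 2 (pmf R (g (fst \<omega>) (snd \<omega>), fst \<omega>)))
        = (\<Sum>(q, w)\<in>set_pmf P \<times> set_pmf M.
             pmf P q * pmf M w * log 2 (pmf P q * pmf (map_pmf (g q) M) (g q w)))"
      unfolding p_def set_pair_pmf by (rule sum.cong) (auto simp: pR pmf_pair)
    then show ?thesis
      unfolding ent_rv_expectation[OF fin] R_def[symmetric] by (simp add: sum.cartesian_product)
  qed
  also have "\<dots> = - (\<Sum>q\<in>set_pmf P. \<Sum>w\<in>set_pmf M. pmf M w * (pmf P q * log 2 (pmf P q))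
         + pmf P q * (pmf M w * log 2 (pmf (map_pmf (g q) M) (g q w))))"
  proof (intro arg_cong[where f=uminus] sum.cong refl)
    fix q w assume "q \<in> set_pmf P" and w: "w \<in> set_pmf M"
    then have "pmf P q > 0" by (simp add: pmf_positive)
    then show "pmf P q * pmf M w * log 2 (pmf P q * pmf (map_pmf (g q) M) (g q w))
        = pmf M w * (pmf P q * log 2 (pmf P q))
          + pmf P q * (pmf M w * log 2 (pmf (map_pmf (g q) M) (g q w)))"
      using pmf_map_pmf_pos[OF w, of "g q"] by (simp add: log_mult algebra_simps)
  qed
  also have "\<dots> = ent P + (\<Sum>q\<in>set_pmf P. pmf P q * ent (map_pmf (g q) M))"
    unfolding ent_def[of P] ent_rv_expectation[OF fM, unfolded ent_rv_def]
    by (simp add: sum.distrib sum_distrib_left[symmetric] sum_distrib_right[symmetric] sM sum_negf)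
  finally show ?thesis
    by (simp add: cond_ent_ent_rv ent_rv_def p_def map_fst_pair_pmf)
qed

section \<open>Uniform messages\<close>

lemma msg_set_eq_lists: "msg_set K L = {ws. set ws \<subseteq> {w. length w = L} \<and> length ws = K}"
  unfolding msg_set_def by (auto simp: in_set_conv_nth) (meson mem_Collect_eq nth_mem subsetD)

lemma finite_bool_lists: "finite {w :: bool list. length w = L}"
  using finite_lists_length_eq[of "UNIV :: bool set" L] by simp

lemma card_bool_lists: "card {w :: bool list. length w = L} = 2 ^ L"
  using card_lists_length_eq[of "UNIV :: bool set" L] by simp

lemma finite_msg_set: "finite (msg_set K L)"
  unfolding msg_set_eq_lists by (rule finite_lists_length_eq[OF finite_bool_lists])

lemma card_msg_set: "card (msg_set K L) = 2 ^ (K * L)"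
  unfolding msg_set_eq_lists card_lists_length_eq[OF finite_bool_lists] card_bool_lists
  by (metis power_mult mult.commute)

lemma msg_set_nonempty: "msg_set K L \<noteq> {}"
  using msg_set_def[of K L] by (auto intro!: exI[of _ "replicate K (replicate L False)"])

lemma set_pmf_msg_dist [simp]: "set_pmf (msg_dist K L) = msg_set K L"
  unfolding msg_dist_def by (simp add: finite_msg_set msg_set_nonempty)

lemma pmf_msg_dist: "w \<in> msg_set K L \<Longrightarrow> pmf (msg_dist K L) w = 1 / 2 ^ (K * L)"
  unfolding msg_dist_def by (simp add: finite_msg_set msg_set_nonempty card_msg_set)

lemma msg_set_take_fiber:
  assumes j: "j \<le> K" and u: "u \<in> msg_set j L"
  shows "{w\<in>msg_set K L. take j w = u} = (\<lambda>v. u @ v) ` msg_set (K - j) L"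
proof (intro set_eqI iffI)
  fix w assume "w \<in> {w\<in>msg_set K L. take j w = u}"
  then have w: "w \<in> msg_set K L" "take j w = u" by auto
  have "drop j w \<in> msg_set (K - j) L" using w(1) j unfolding msg_set_def by auto
  moreover have "w = u @ drop j w" using w(2) by (metis append_take_drop_id)
  ultimately show "w \<in> (\<lambda>v. u @ v) ` msg_set (K - j) L" by blast
next
  fix w assume "w \<in> (\<lambda>v. u @ v) ` msg_set (K - j) L"
  then obtain v where v: "v \<in> msg_set (K - j) L" "w = u @ v" by auto
  have "length u = j" using u unfolding msg_set_def by auto
  then show "w \<in> {w\<in>msg_set K L. take j w = u}"
    using u v j unfolding msg_set_def by (auto simp: nth_append)
qed

lemma ent_rv_msg_dist_take:
  assumes j: "j \<le> K"
  shows "ent_rv (msg_dist K L) (take j) = real (j * L)"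
proof -
  have fin: "finite (set_pmf (msg_dist K L))" by (simp add: finite_msg_set)
  have pmf_take: "pmf (map_pmf (take j) (msg_dist K L)) (take j w) = 1 / 2 ^ (j * L)"
    if w: "w \<in> msg_set K L" for w
  proof -
    have u: "take j w \<in> msg_set j L" using w j unfolding msg_set_def by auto
    have "pmf (map_pmf (take j) (msg_dist K L)) (take j w)
        = real (card ((\<lambda>v. take j w @ v) ` msg_set (K - j) L)) / 2 ^ (K * L)"
      unfolding pmf_map_pmf_finite[OF fin] set_pmf_msg_dist msg_set_take_fiber[OF j u, symmetric]
      by (simp add: pmf_msg_dist)
    also have "\<dots> = 2 ^ ((K - j) * L) / 2 ^ ((K - j) * L + j * L)"
      using j by (simp add: card_image inj_on_def card_msg_set add_mult_distrib[symmetric])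
    finally show ?thesis by (simp add: power_add)
  qed
  have "ent_rv (msg_dist K L) (take j)
      = - (\<Sum>w\<in>msg_set K L. (1 / 2 ^ (K * L)) * log 2 (1 / 2 ^ (j * L)))"
    unfolding ent_rv_expectation[OF fin]
    by (intro arg_cong[where f=uminus] sum.cong) (auto simp: pmf_msg_dist pmf_take)
  then show ?thesis by (simp add: card_msg_set log_divide)
qed

lemma ent_rv_msg_dist: "ent_rv (msg_dist K L) (\<lambda>w. w) = real (K * L)"
proof -
  have "ent_rv (msg_dist K L) (\<lambda>w. w) = ent_rv (msg_dist K L) (take K)"
    by (rule ent_rv_cong) (auto simp: msg_set_def)
  then show ?thesis by (simp add: ent_rv_msg_dist_take)
qed

section \<open>The converse bound\<close>

lemma sum_inverse_powers_Suc:
  fixes x :: real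
  shows "(\<Sum>i<Suc n. 1 / x ^ i) = 1 + (\<Sum>i<n. 1 / x ^ i) / x"
  by (subst sum.lessThan_Suc_shift) (simp add: sum_divide_distrib mult.commute)

locale mupir =
  fixes N U K L :: nat
    and Qd :: "nat \<Rightarrow> nat list pmf"
    and ans :: "nat \<Rightarrow> nat \<Rightarrow> bool list list \<Rightarrow> bool list"
  assumes scheme: "mupir_scheme N U K L Qd ans"
begin

abbreviation S :: nat where "S \<equiv> N + U - 1"

definition residual_ent :: "nat \<Rightarrow> nat \<Rightarrow> real" where
  "residual_ent j \<theta> = cond_ent (joint Qd K L \<theta>) (\<lambda>z. answers S ans (fst z) (snd z))
     (\<lambda>z. (take j (snd z), fst z))"

lemma finite_queries: "\<theta> < K \<Longrightarrow> finite (set_pmf (Qd \<theta>))"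
  using scheme by (simp add: mupir_scheme_def Let_def)

lemma finite_joint: "\<theta> < K \<Longrightarrow> finite (set_pmf (joint Qd K L \<theta>))"
  by (simp add: joint_def finite_queries finite_msg_set)

lemma ent_rv_known_msgs:
  assumes "\<theta> < K" "j \<le> K"
  shows "ent_rv (joint Qd K L \<theta>) (\<lambda>z. (take j (snd z), fst z)) = real (j * L) + ent (Qd \<theta>)"
proof -
  have "ent_rv (joint Qd K L \<theta>) (\<lambda>z. (take j (snd z), fst z))
      = ent_rv (joint Qd K L \<theta>) (\<lambda>z. ((\<lambda>q. q) (fst z), take j (snd z)))"
    by (rule ent_rv_eq[OF finite_joint[OF assms(1)]]) auto
  also have "\<dots> = ent_rv (Qd \<theta>) (\<lambda>q. q) + ent_rv (msg_dist K L) (take j)"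
    unfolding joint_def
    by (rule ent_rv_pair_pmf) (simp_all add: finite_queries[OF assms(1)] finite_msg_set)
  finally show ?thesis using ent_rv_msg_dist_take[OF assms(2)] by (simp add: ent_rv_def)
qed

text \<open>The decoder recovers \<open>W\<^sub>k\<close> from the answers and the queries, so \<open>W\<^sub>k\<close> contributes
  its full \<open>L\<close> bits.\<close>
lemma residual_ent_desired:
  assumes k: "k < K"
  shows "residual_ent k k = real L + residual_ent (Suc k) k"
proof -
  obtain dec where dec: "\<And>q w. q \<in> set_pmf (Qd k) \<Longrightarrow> w \<in> msg_set K L \<Longrightarrow>
      dec k q (answers S ans q w) = w ! k"
    using scheme k unfolding mupir_scheme_def Let_def by blast
  define A where "A z = answers S ans (fst z) (snd z)" for z
  have "(A z, take (Suc k) (snd z), fst z) = (A z', take (Suc k) (snd z'), fst z')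
      \<longleftrightarrow> (A z, take k (snd z), fst z) = (A z', take k (snd z'), fst z')"
    if "z \<in> set_pmf (joint Qd K L k)" "z' \<in> set_pmf (joint Qd K L k)" for z z'
  proof
    assume "(A z, take (Suc k) (snd z), fst z) = (A z', take (Suc k) (snd z'), fst z')"
    then show "(A z, take k (snd z), fst z) = (A z', take k (snd z'), fst z')"
      by (auto dest: arg_cong[where f="take k"])
  next
    assume eq: "(A z, take k (snd z), fst z) = (A z', take k (snd z'), fst z')"
    have z: "fst z \<in> set_pmf (Qd k)" "snd z \<in> msg_set K L"
      and z': "fst z' \<in> set_pmf (Qd k)" "snd z' \<in> msg_set K L"
      using that by (auto simp: joint_def)
    from eq have "A z = A z'" and "fst z = fst z'" by simp_all
    then have "snd z ! k = snd z' ! k"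
      using dec[OF z] dec[OF z'] by (simp add: A_def)
    moreover have "k < length (snd z)" "k < length (snd z')"
      using k z z' by (auto simp: msg_set_def)
    ultimately show "(A z, take (Suc k) (snd z), fst z) = (A z', take (Suc k) (snd z'), fst z')"
      using eq by (simp add: take_Suc_conv_app_nth)
  qed
  then have "ent_rv (joint Qd K L k) (\<lambda>z. (A z, take k (snd z), fst z))
      = ent_rv (joint Qd K L k) (\<lambda>z. (A z, take (Suc k) (snd z), fst z))"
    by (intro ent_rv_eq[OF finite_joint[OF k]])
  then show ?thesis
    using ent_rv_known_msgs[OF k, of k] ent_rv_known_msgs[OF k, of "Suc k"] k
    unfolding residual_ent_def cond_ent_ent_rv A_def by simp
qed

lemma privacy:
  assumes "n < S" "k < K" "k' < K"
  shows "map_pmf (\<lambda>(q, w). (q ! n, ans n (q ! n) w, w)) (joint Qd K L k)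
       = map_pmf (\<lambda>(q, w). (q ! n, ans n (q ! n) w, w)) (joint Qd K L k')"
proof -
  have all: "\<forall>s<S. \<forall>k<K. map_pmf (\<lambda>(q, w). (q ! s, ans s (q ! s) w, w)) (joint Qd K L 0)
      = map_pmf (\<lambda>(q, w). (q ! s, ans s (q ! s) w, w)) (joint Qd K L k)"
    using scheme unfolding mupir_scheme_def Let_def by blast
  show ?thesis
    using all[rule_format, OF assms(1,2)] all[rule_format, OF assms(1,3)] by simp
qed

lemma residual_ent_nonneg: "\<theta> < K \<Longrightarrow> residual_ent j \<theta> \<ge> 0"
  unfolding residual_ent_def by (rule cond_ent_nonneg[OF finite_joint])

text \<open>Source by source: conditioning on less, privacy (the joint law of a source's query,
  answer and the messages does not depend on the desired index) and the independence of queries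
  and messages move the residual entropy of each answer from desired index \<open>k + 1\<close> to \<open>k\<close>.\<close>
lemma residual_ent_privacy:
  assumes k: "Suc k < K"
  shows "residual_ent (Suc k) (Suc k) \<le> real S * residual_ent (Suc k) k"
proof -
  have k': "k < K" using k by simp
  define T where "T z = take (Suc k) (snd z)" for z :: "nat list \<times> bool list list"
  define A where "A n z = ans n (fst z ! n) (snd z)" for n and z :: "nat list \<times> bool list list"
  have A_eq: "answers S ans (fst z) (snd z) = map (\<lambda>n. A n z) [0..<S]" for z
    by (simp add: answers_def A_def)
  have source: "cond_ent (joint Qd K L (Suc k)) (A n) (\<lambda>z. (T z, fst z)) \<le> residual_ent (Suc k) k"
    if n: "n < S" for n
  proof -
    define t where "t = (\<lambda>(q, w). (q ! n, ans n (q ! n) w, w :: bool list list))"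
    have local_view: "cond_ent (joint Qd K L j) (A n) (\<lambda>z. (T z, fst z ! n))
        = cond_ent (map_pmf t (joint Qd K L j)) (\<lambda>x. fst (snd x))
          (\<lambda>x. (take (Suc k) (snd (snd x)), fst x))"
      for j
      unfolding cond_ent_map_pmf by (simp add: t_def A_def[abs_def] T_def split_beta)
    have "cond_ent (joint Qd K L (Suc k)) (A n) (\<lambda>z. (T z, fst z))
        \<le> cond_ent (joint Qd K L (Suc k)) (A n) (\<lambda>z. (T z, fst z ! n))"
      by (rule cond_ent_mono_condition[OF finite_joint[OF k]]) auto
    also have "\<dots> = cond_ent (joint Qd K L k) (A n) (\<lambda>z. (T z, fst z ! n))"
      unfolding local_view t_def using privacy[OF n k k'] by simp
    also have "\<dots> \<le> cond_ent (joint Qd K L k) (A n) (\<lambda>z. (T z, fst z))"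
      using cond_ent_pair_pmf_local_query[OF finite_queries[OF k'],
          of "msg_dist K L" "ans n" "\<lambda>q. q ! n" "take (Suc k)"]
      unfolding joint_def A_def T_def by (simp add: finite_msg_set)
    also have "\<dots> \<le> residual_ent (Suc k) k"
      unfolding residual_ent_def T_def
      by (rule cond_ent_mono_fun[OF finite_joint[OF k']])
        (use n in \<open>auto simp: A_def answers_def map_eq_conv\<close>)
    finally show ?thesis .
  qed
  have "residual_ent (Suc k) (Suc k)
      \<le> (\<Sum>n<S. cond_ent (joint Qd K L (Suc k)) (A n) (\<lambda>z. (T z, fst z)))"
    using cond_ent_subadditive[OF finite_joint[OF k], of A S]
    unfolding residual_ent_def A_eq T_def .
  also have "\<dots> \<le> (\<Sum>n<S. residual_ent (Suc k) k)"
    by (rule sum_mono) (use source in auto)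
  finally show ?thesis by simp
qed

lemma residual_ent_lower_bound:
  assumes S: "S \<ge> 1" and k: "k < K"
  shows "real L * (\<Sum>i<K - k. 1 / real S ^ i) \<le> residual_ent k k"
proof -
  have "k \<le> K - 1" using k by simp
  then show ?thesis
  proof (induction k rule: inc_induct)
    case base
    then show ?case
      using residual_ent_desired[of "K - 1"] residual_ent_nonneg[of "K - 1" K] k by simp
  next
    case (step n)
    have n: "n < K" "Suc n < K" using step.hyps k by auto
    have K_n: "K - n = Suc (K - Suc n)" using n by simp
    have "real L * (\<Sum>i<K - n. 1 / real S ^ i)
        = real L + real L * (\<Sum>i<K - Suc n. 1 / real S ^ i) / real S"
      unfolding K_n sum_inverse_powers_Suc by (simp add: algebra_simps)
    also have "\<dots> \<le> real L + residual_ent (Suc n) (Suc n) / real S"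
      using step.IH S by (simp add: divide_right_mono)
    also have "\<dots> \<le> real L + residual_ent (Suc n) n"
      using residual_ent_privacy[OF n(2)] S by (simp add: field_simps)
    also have "\<dots> = residual_ent n n"
      using residual_ent_desired[OF n(1)] by simp
    finally show ?case .
  qed
qed

lemma residual_ent_le_download:
  assumes K: "K \<ge> 1"
  shows "residual_ent 0 0 \<le> download N U K L Qd ans 0"
proof -
  have fin: "finite (set_pmf (joint Qd K L 0))" using finite_joint K by simp
  have "residual_ent 0 0 \<le> cond_ent (joint Qd K L 0) (\<lambda>z. answers S ans (fst z) (snd z)) fst"
    unfolding residual_ent_def by (rule cond_ent_mono_condition[OF fin]) auto
  also have "\<dots> \<le> (\<Sum>s<S. cond_ent (joint Qd K L 0) (\<lambda>z. ans s (fst z ! s) (snd z)) fst)"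
    using cond_ent_subadditive[OF fin, of "\<lambda>s z. ans s (fst z ! s) (snd z)" S fst]
    by (simp add: answers_def)
  also have "\<dots> = download N U K L Qd ans 0"
    unfolding download_def by (simp add: split_beta')
  finally show ?thesis .
qed

lemma download_lower_bound:
  assumes "K \<ge> 1" "S \<ge> 1"
  shows "real L * (\<Sum>i<K. 1 / real S ^ i) \<le> download N U K L Qd ans 0"
  using residual_ent_lower_bound[OF assms(2), of 0] residual_ent_le_download[OF assms(1)] assms(1)
  by simp

lemma rate_le:
  assumes K: "K \<ge> 1" and S: "S \<ge> 1"
  shows "mupir_rate N U K L Qd ans \<le> inverse (\<Sum>i<K. 1 / real S ^ i)"
proof -
  define G where "G = (\<Sum>i<K. 1 / real S ^ i)"
  have G: "G \<ge> 1"
    unfolding G_def using K member_le_sum[of 0 "{..<K}" "\<lambda>i. 1 / real S ^ i"] by simp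
  define D where "D = (MAX \<theta>\<in>{..<K}. download N U K L Qd ans \<theta>)"
  have "download N U K L Qd ans 0 \<le> D"
    unfolding D_def using K by (intro Max_ge) auto
  then have "real L * G \<le> D"
    using download_lower_bound[OF K S] unfolding G_def by linarith
  have "real L / D \<le> inverse G"
  proof (cases "L = 0")
    case False
    then have LG: "0 < real L * G" using G by simp
    then have "0 < D" using \<open>real L * G \<le> D\<close> by linarith
    then have "real L / D \<le> real L / (real L * G)"
      using LG \<open>real L * G \<le> D\<close> by (intro divide_left_mono) auto
    then show ?thesis using False by (simp add: inverse_eq_divide)
  qed (use G in simp)
  then show ?thesis unfolding mupir_rate_def D_def G_def .
qed

end

section \<open>Achievability by shifted parity queries\<close>

definition digit_vecs :: "nat \<Rightarrow> nat \<Rightarrow> nat list set" where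
  "digit_vecs S K = {f. set f \<subseteq> {..<S} \<and> length f = K}"

definition shift_digit :: "nat \<Rightarrow> nat \<Rightarrow> nat \<Rightarrow> nat list \<Rightarrow> nat list" where
  "shift_digit S \<theta> n f = f[\<theta> := (f ! \<theta> + n) mod S]"

definition selected_bit :: "nat list \<Rightarrow> bool list list \<Rightarrow> nat \<Rightarrow> bool" where
  "selected_bit f w k \<longleftrightarrow> f ! k \<noteq> 0 \<and> w ! k ! (f ! k - 1)"

definition xor_selected :: "nat \<Rightarrow> nat list \<Rightarrow> bool list list \<Rightarrow> bool" where
  "xor_selected K f w \<longleftrightarrow> odd (card {k. k < K \<and> selected_bit f w k})"

lemma finite_digit_vecs: "finite (digit_vecs S K)"
  unfolding digit_vecs_def by (rule finite_lists_length_eq) simp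

lemma card_digit_vecs: "card (digit_vecs S K) = S ^ K"
  unfolding digit_vecs_def by (simp add: card_lists_length_eq)

lemma zero_in_digit_vecs: "S > 0 \<Longrightarrow> replicate K 0 \<in> digit_vecs S K"
  unfolding digit_vecs_def by auto

lemma digit_vecs_nonempty: "S > 0 \<Longrightarrow> digit_vecs S K \<noteq> {}"
  using zero_in_digit_vecs by blast

lemma digit_vecs_nth_less: "f \<in> digit_vecs S K \<Longrightarrow> k < K \<Longrightarrow> f ! k < S"
  unfolding digit_vecs_def by (auto dest: nth_mem)

lemma shift_digit_in_digit_vecs:
  assumes "S > 0" "f \<in> digit_vecs S K"
  shows "shift_digit S \<theta> n f \<in> digit_vecs S K"
  using assms set_update_subset_insert[of f \<theta> "(f ! \<theta> + n) mod S"]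
  unfolding digit_vecs_def shift_digit_def by auto

lemma mod_add_right_cancel_less:
  fixes a b n S :: nat
  assumes "a < S" "b < S" "(a + n) mod S = (b + n) mod S"
  shows "a = b"
proof -
  have "S dvd (max a b + n) - (min a b + n)"
    using assms(3) mod_eq_dvd_iff_nat[of "min a b + n" "max a b + n" S]
    by (auto simp: max_def min_def)
  then have "S dvd max a b - min a b" by simp
  moreover have "max a b - min a b < S" using assms(1,2) by (auto simp: max_def)
  ultimately have "max a b - min a b = 0" using nat_dvd_not_less by blast
  then show ?thesis by (auto simp: max_def min_def split: if_splits)
qed

lemma inj_on_shift_digit: "\<theta> < K \<Longrightarrow> inj_on (shift_digit S \<theta> n) (digit_vecs S K)"
proof (rule inj_onI)
  fix f g assume \<theta>: "\<theta> < K" and f: "f \<in> digit_vecs S K" and g: "g \<in> digit_vecs S K"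
    and eq: "shift_digit S \<theta> n f = shift_digit S \<theta> n g"
  have len: "length f = K" "length g = K" using f g by (auto simp: digit_vecs_def)
  have "(f ! \<theta> + n) mod S = (g ! \<theta> + n) mod S"
    using arg_cong[OF eq, of "\<lambda>x. x ! \<theta>"] \<theta> len by (simp add: shift_digit_def)
  then have "f ! \<theta> = g ! \<theta>"
    using digit_vecs_nth_less[OF f \<theta>] digit_vecs_nth_less[OF g \<theta>] mod_add_right_cancel_less by blast
  show "f = g"
  proof (rule nth_equalityI)
    show "length f = length g" using len by simp
    fix j assume "j < length f"
    show "f ! j = g ! j"
    proof (cases "j = \<theta>")
      case False
      then show ?thesis using arg_cong[OF eq, of "\<lambda>x. x ! j"] by (simp add: shift_digit_def)
    qed (use \<open>f ! \<theta> = g ! \<theta>\<close> in simp)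
  qed
qed

lemma bij_betw_shift_digit:
  assumes "S > 0" "\<theta> < K"
  shows "bij_betw (shift_digit S \<theta> n) (digit_vecs S K) (digit_vecs S K)"
proof -
  have "shift_digit S \<theta> n ` digit_vecs S K = digit_vecs S K"
    using assms finite_digit_vecs shift_digit_in_digit_vecs[OF assms(1)]
    by (intro card_subset_eq) (auto simp: card_image inj_on_shift_digit)
  then show ?thesis using inj_on_shift_digit[OF assms(2)] by (simp add: bij_betw_def)
qed

lemma map_pmf_shift_digit_uniform:
  assumes "S > 0" "\<theta> < K"
  shows "map_pmf (shift_digit S \<theta> n) (pmf_of_set (digit_vecs S K)) = pmf_of_set (digit_vecs S K)"
  by (rule map_pmf_of_set_bij_betw[OF bij_betw_shift_digit[OF assms] digit_vecs_nonempty[OF assms(1)]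
        finite_digit_vecs])

lemma xor_selected_split:
  assumes "\<theta> < K"
  shows "xor_selected K f w
    \<longleftrightarrow> odd (card {k. k < K \<and> k \<noteq> \<theta> \<and> selected_bit f w k}) \<noteq> selected_bit f w \<theta>"
proof -
  have "{k. k < K \<and> selected_bit f w k}
      = (if selected_bit f w \<theta> then insert \<theta> else id) {k. k < K \<and> k \<noteq> \<theta> \<and> selected_bit f w k}"
    using assms by auto
  then show ?thesis unfolding xor_selected_def by simp
qed

definition flip_bit :: "nat \<Rightarrow> nat \<Rightarrow> bool list list \<Rightarrow> bool list list" where
  "flip_bit k i w = w[k := (w ! k)[i := \<not> w ! k ! i]]"

lemma flip_bit_in_msg_set: "w \<in> msg_set K L \<Longrightarrow> flip_bit k i w \<in> msg_set K L"
  unfolding msg_set_def flip_bit_def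
  by (cases "k < K") (auto simp: nth_list_update list_update_beyond)

lemma flip_bit_flip_bit:
  "w \<in> msg_set K L \<Longrightarrow> k < K \<Longrightarrow> i < L \<Longrightarrow> flip_bit k i (flip_bit k i w) = w"
  unfolding msg_set_def flip_bit_def by (simp add: list_update_overwrite)

lemma map_pmf_flip_bit_msg_dist:
  assumes "k < K" "i < L"
  shows "map_pmf (flip_bit k i) (msg_dist K L) = msg_dist K L"
proof -
  have "bij_betw (flip_bit k i) (msg_set K L) (msg_set K L)"
    using assms flip_bit_in_msg_set flip_bit_flip_bit
    by (intro bij_betw_byWitness[where f'="flip_bit k i"]) auto
  then show ?thesis
    unfolding msg_dist_def by (rule map_pmf_of_set_bij_betw[OF _ msg_set_nonempty finite_msg_set])
qed

lemma xor_selected_flip_bit: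
  assumes w: "w \<in> msg_set K L" and k: "k < K" "f ! k = Suc i" and i: "i < L"
  shows "xor_selected K f (flip_bit k i w) \<longleftrightarrow> \<not> xor_selected K f w"
proof -
  have "length w = K" "length (w ! k) = L" using w k unfolding msg_set_def by auto
  then have sel: "selected_bit f (flip_bit k i w) j
      \<longleftrightarrow> (if j = k then \<not> selected_bit f w j else selected_bit f w j)" for j
    using k i by (simp add: selected_bit_def flip_bit_def nth_list_update)
  then have "{j. j < K \<and> j \<noteq> k \<and> selected_bit f (flip_bit k i w) j}
      = {j. j < K \<and> j \<noteq> k \<and> selected_bit f w j}"
    by auto
  then show ?thesis
    using xor_selected_split[OF k(1), of f "flip_bit k i w"] xor_selected_split[OF k(1), of f w]
      sel[of k]
    by simp
qed

lemma ent_bool_symmetric: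
  assumes "map_pmf Not B = B"
  shows "ent B = 1"
proof -
  have "pmf B True = pmf (map_pmf Not B) (Not False)" using assms by simp
  also have "\<dots> = pmf B False" by (rule pmf_map_inj') (simp add: inj_def)
  finally have "pmf B True = pmf B False" .
  moreover have "sum (pmf B) UNIV = 1" by (rule sum_pmf_eq_1) auto
  then have "pmf B True + pmf B False = 1" by (simp add: UNIV_bool)
  ultimately have half: "pmf B True = 1 / 2" "pmf B False = 1 / 2" by auto
  then have "set_pmf B = {True, False}" by (auto simp: set_pmf_iff)
  then show ?thesis unfolding ent_def by (simp add: half log_divide)
qed

lemma ent_rv_xor_selected:
  assumes S: "S > 0" and f: "f \<in> digit_vecs S K"
  shows "ent_rv (msg_dist K (S - 1)) (\<lambda>w. [xor_selected K f w])
    = (if f = replicate K 0 then 0 else 1)"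
proof (cases "f = replicate K 0")
  case True
  then have none: "{k. k < K \<and> selected_bit f w k} = {}" for w by (auto simp: selected_bit_def)
  have "xor_selected K f w = False" for w unfolding xor_selected_def none by simp
  then show ?thesis using True by (simp add: ent_rv_def ent_def)
next
  case False
  have "\<exists>k<K. f ! k \<noteq> 0"
  proof (rule ccontr)
    assume "\<not> (\<exists>k<K. f ! k \<noteq> 0)"
    then have "f = replicate K 0" using f by (auto simp: digit_vecs_def intro!: nth_equalityI)
    with False show False ..
  qed
  then obtain k where k: "k < K" "f ! k \<noteq> 0" by blast
  define i where "i = f ! k - 1"
  have i: "i < S - 1" "f ! k = Suc i"
    using digit_vecs_nth_less[OF f k(1)] k(2) by (auto simp: i_def)
  define B where "B = map_pmf (xor_selected K f) (msg_dist K (S - 1))"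
  have "B = map_pmf (xor_selected K f) (map_pmf (flip_bit k i) (msg_dist K (S - 1)))"
    unfolding B_def map_pmf_flip_bit_msg_dist[OF k(1) i(1)] ..
  also have "\<dots> = map_pmf Not B"
    unfolding B_def map_pmf_comp using xor_selected_flip_bit[OF _ k(1) i(2,1)]
    by (intro map_pmf_cong) auto
  finally have "ent B = 1" by (intro ent_bool_symmetric) simp
  moreover have "ent_rv (msg_dist K (S - 1)) (\<lambda>w. [xor_selected K f w]) = ent B"
    unfolding B_def ent_rv_def[symmetric] by (rule ent_rv_eq) (simp_all add: finite_msg_set)
  ultimately show ?thesis using False by simp
qed

definition xor_queries :: "nat \<Rightarrow> nat \<Rightarrow> nat list \<Rightarrow> nat list" where
  "xor_queries S \<theta> f = map (\<lambda>n. list_encode (shift_digit S \<theta> n f)) [0..<S]"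

definition xor_query_pmf :: "nat \<Rightarrow> nat \<Rightarrow> nat \<Rightarrow> nat list pmf" where
  "xor_query_pmf S K \<theta> = map_pmf (xor_queries S \<theta>) (pmf_of_set (digit_vecs S K))"

definition xor_answer :: "nat \<Rightarrow> nat \<Rightarrow> nat \<Rightarrow> bool list list \<Rightarrow> bool list" where
  "xor_answer K s x w = [xor_selected K (list_decode x) w]"

text \<open>Source \<open>(m + S - d) mod S\<close> received the digit \<open>m\<close> at the desired position; for \<open>m = 0\<close>
  its answer is the interference alone, and for \<open>m = j + 1\<close> the interference plus bit \<open>j\<close>.\<close>
definition xor_decoder :: "nat \<Rightarrow> nat \<Rightarrow> nat list \<Rightarrow> bool list list \<Rightarrow> bool list" where
  "xor_decoder S \<theta> q as =
     (let d = list_decode (q ! 0) ! \<theta>; bit = (\<lambda>m. hd (as ! ((m + S - d) mod S)))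
      in map (\<lambda>j. bit (Suc j) \<noteq> bit 0) [0..<S - 1])"

lemma xor_queries_nth: "s < S \<Longrightarrow> xor_queries S \<theta> f ! s = list_encode (shift_digit S \<theta> s f)"
  unfolding xor_queries_def by simp

lemma set_pmf_xor_query_pmf:
  "S > 0 \<Longrightarrow> set_pmf (xor_query_pmf S K \<theta>) = xor_queries S \<theta> ` digit_vecs S K"
  unfolding xor_query_pmf_def by (simp add: finite_digit_vecs digit_vecs_nonempty)

lemma xor_scheme_local_view:
  assumes S: "S > 0" and s: "s < S" and \<theta>: "\<theta> < K"
  shows "map_pmf (\<lambda>(q, w). (q ! s, xor_answer K s (q ! s) w, w)) (joint (xor_query_pmf S K) K L \<theta>)
    = map_pmf (\<lambda>(f, w). (list_encode f, xor_answer K s (list_encode f) w, w))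
        (pair_pmf (pmf_of_set (digit_vecs S K)) (msg_dist K L))"
proof -
  define V where "V = pmf_of_set (digit_vecs S K)"
  define view where "view =
    (\<lambda>(f, w). (list_encode f, xor_answer K s (list_encode f) w, w :: bool list list))"
  have "joint (xor_query_pmf S K) K L \<theta>
      = map_pmf (apfst (xor_queries S \<theta>)) (pair_pmf V (msg_dist K L))"
    unfolding joint_def xor_query_pmf_def V_def by (rule pair_map_pmf1)
  then have "map_pmf (\<lambda>(q, w). (q ! s, xor_answer K s (q ! s) w, w))
      (joint (xor_query_pmf S K) K L \<theta>)
      = map_pmf view (map_pmf (apfst (shift_digit S \<theta> s)) (pair_pmf V (msg_dist K L)))"
    by (simp add: map_pmf_comp view_def xor_queries_nth[OF s] split_beta)
  also have "map_pmf (apfst (shift_digit S \<theta> s)) (pair_pmf V (msg_dist K L))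
      = pair_pmf (map_pmf (shift_digit S \<theta> s) V) (msg_dist K L)"
    by (rule pair_map_pmf1[symmetric])
  finally show ?thesis
    unfolding V_def map_pmf_shift_digit_uniform[OF S \<theta>] view_def .
qed

lemma shift_digit_to:
  assumes "f ! \<theta> < S" "\<theta> < length f" "m < S"
  shows "shift_digit S \<theta> ((m + S - f ! \<theta>) mod S) f ! \<theta> = m"
proof -
  have "(f ! \<theta> + (m + S - f ! \<theta>) mod S) mod S = (f ! \<theta> + (m + S - f ! \<theta>)) mod S"
    by (simp add: mod_add_right_eq)
  also have "\<dots> = m" using assms by simp
  finally show ?thesis using assms(2) by (simp add: shift_digit_def)
qed

lemma xor_selected_shift_digit:
  assumes "\<theta> < K"
  shows "xor_selected K (shift_digit S \<theta> n f) w
    \<longleftrightarrow> odd (card {k. k < K \<and> k \<noteq> \<theta> \<and> selected_bit f w k}) \<noteq> selected_bit (shift_digit S \<theta> n f) w \<theta>"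
proof -
  have "{k. k < K \<and> k \<noteq> \<theta> \<and> selected_bit (shift_digit S \<theta> n f) w k}
      = {k. k < K \<and> k \<noteq> \<theta> \<and> selected_bit f w k}"
    by (auto simp: selected_bit_def shift_digit_def)
  then show ?thesis using xor_selected_split[OF assms, of "shift_digit S \<theta> n f" w] by simp
qed

lemma xor_decoder_correct:
  assumes S: "S \<ge> 2" and \<theta>: "\<theta> < K" and f: "f \<in> digit_vecs S K" and w: "w \<in> msg_set K (S - 1)"
  shows "xor_decoder S \<theta> (xor_queries S \<theta> f) (answers S (xor_answer K) (xor_queries S \<theta> f) w)
    = w ! \<theta>"
proof -
  define d where "d = f ! \<theta>"
  define src where "src m = (m + S - d) mod S" for m
  define P where "P = odd (card {k. k < K \<and> k \<noteq> \<theta> \<and> selected_bit f w k})"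
  have len: "length f = K" "length (w ! \<theta>) = S - 1"
    using f w \<theta> by (auto simp: digit_vecs_def msg_set_def)
  have d: "d < S" unfolding d_def by (rule digit_vecs_nth_less[OF f \<theta>])
  have decode_d: "list_decode (xor_queries S \<theta> f ! 0) ! \<theta> = d"
    using S \<theta> len d by (simp add: xor_queries_nth shift_digit_def d_def)
  have answer: "hd (answers S (xor_answer K) (xor_queries S \<theta> f) w ! src m)
      \<longleftrightarrow> P \<noteq> (m \<noteq> 0 \<and> w ! \<theta> ! (m - 1))" if "m < S" for m
  proof -
    have "src m < S" using S by (simp add: src_def)
    moreover have "shift_digit S \<theta> (src m) f ! \<theta> = m"
      unfolding src_def d_def using shift_digit_to d \<theta> len that by (simp add: d_def)
    ultimately show ?thesis
      using xor_selected_shift_digit[OF \<theta>, of S "src m" f w]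
      by (simp add: answers_def xor_answer_def xor_queries_nth selected_bit_def P_def)
  qed
  have "xor_decoder S \<theta> (xor_queries S \<theta> f) (answers S (xor_answer K) (xor_queries S \<theta> f) w)
      = map (\<lambda>j. w ! \<theta> ! j) [0..<S - 1]"
    unfolding xor_decoder_def Let_def decode_d src_def[symmetric]
    using answer[of 0] answer by (intro map_cong) auto
  also have "\<dots> = w ! \<theta>" using map_nth[of "w ! \<theta>"] len(2) by simp
  finally show ?thesis .
qed

lemma mupir_scheme_xor:
  assumes S: "S \<ge> 2" "S = N + U - 1"
  shows "mupir_scheme N U K (S - 1) (xor_query_pmf S K) (xor_answer K)"
proof -
  have S0: "S > 0" using S by simp
  have "\<forall>\<theta><K. finite (set_pmf (xor_query_pmf S K \<theta>))
      \<and> (\<forall>q\<in>set_pmf (xor_query_pmf S K \<theta>). length q = S)"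
    using set_pmf_xor_query_pmf[OF S0] finite_digit_vecs by (auto simp: xor_queries_def)
  moreover have "\<forall>s<S. \<forall>k<K.
      map_pmf (\<lambda>(q, w). (q ! s, xor_answer K s (q ! s) w, w))
        (joint (xor_query_pmf S K) K (S - 1) 0) =
      map_pmf (\<lambda>(q, w). (q ! s, xor_answer K s (q ! s) w, w))
        (joint (xor_query_pmf S K) K (S - 1) k)"
    using xor_scheme_local_view[OF S0] by simp
  moreover have "\<forall>\<theta><K. \<forall>q\<in>set_pmf (xor_query_pmf S K \<theta>). \<forall>w\<in>msg_set K (S - 1).
      xor_decoder S \<theta> q (answers S (xor_answer K) q w) = w ! \<theta>"
    using xor_decoder_correct[OF S(1)] set_pmf_xor_query_pmf[OF S0] by auto
  ultimately show ?thesis unfolding mupir_scheme_def Let_def S(2)[symmetric] by blast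
qed

lemma sum_indicator_nonzero_digit_vecs:
  assumes "S > 0"
  shows "(\<Sum>f\<in>digit_vecs S K. if f = replicate K 0 then 0 else 1 :: real) = real S ^ K - 1"
proof -
  have "(\<Sum>f\<in>digit_vecs S K. if f = replicate K 0 then 0 else 1 :: real)
      = real (card (digit_vecs S K - {replicate K 0}))"
    using finite_digit_vecs by (simp add: sum.If_cases Diff_eq Int_commute)
  also have "\<dots> = real S ^ K - 1"
    using zero_in_digit_vecs[OF assms] finite_digit_vecs assms
    by (simp add: card_digit_vecs of_nat_diff)
  finally show ?thesis .
qed

lemma cond_ent_xor_answer:
  assumes S: "S > 0" and \<theta>: "\<theta> < K" and s: "s < S"
  shows "cond_ent (joint (xor_query_pmf S K) K (S - 1) \<theta>)
          (\<lambda>(q, w). xor_answer K s (q ! s) w) (\<lambda>(q, w). q)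
    = (real S ^ K - 1) / real S ^ K"
proof -
  define V where "V = pmf_of_set (digit_vecs S K)"
  define M where "M = msg_dist K (S - 1)"
  define g where "g q w = xor_answer K s (q ! s) w" for q w
  have fV: "finite (set_pmf V)" and fQ: "finite (set_pmf (xor_query_pmf S K \<theta>))"
    using set_pmf_xor_query_pmf[OF S]
    by (simp_all add: V_def finite_digit_vecs digit_vecs_nonempty[OF S])
  have ent_g: "ent (map_pmf (g (xor_queries S \<theta> f)) M)
      = (if shift_digit S \<theta> s f = replicate K 0 then 0 else 1)"
    if "f \<in> digit_vecs S K" for f
    using ent_rv_xor_selected[OF S shift_digit_in_digit_vecs[OF S that]]
    by (simp add: ent_rv_def g_def[abs_def] xor_answer_def xor_queries_nth[OF s] M_def)
  have "cond_ent (joint (xor_query_pmf S K) K (S - 1) \<theta>)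
          (\<lambda>(q, w). xor_answer K s (q ! s) w) (\<lambda>(q, w). q)
      = cond_ent (pair_pmf (xor_query_pmf S K \<theta>) M) (\<lambda>z. g (fst z) (snd z)) fst"
    unfolding joint_def M_def g_def by (simp add: split_beta' cond_ent_def)
  also have "\<dots> = (\<Sum>f\<in>set_pmf V. pmf V f * ent (map_pmf (g (xor_queries S \<theta> f)) M))"
    unfolding cond_ent_pair_pmf_fst[OF fQ
      finite_msg_set[of K "S - 1", folded set_pmf_msg_dist, folded M_def]]
    unfolding xor_query_pmf_def V_def[symmetric] by (rule sum_set_pmf_map_pmf[OF fV])
  also have "\<dots> = (\<Sum>f\<in>digit_vecs S K. if shift_digit S \<theta> s f = replicate K 0 then 0 else 1)
      / real S ^ K"
    using finite_digit_vecs digit_vecs_nonempty[OF S]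
    by (auto simp: V_def ent_g card_digit_vecs sum_divide_distrib intro!: sum.cong)
  also have "(\<Sum>f\<in>digit_vecs S K. if shift_digit S \<theta> s f = replicate K 0 then 0 else 1)
      = (\<Sum>f\<in>digit_vecs S K. if f = replicate K 0 then 0 else 1 :: real)"
    by (rule sum.reindex_bij_betw[OF bij_betw_shift_digit[OF S \<theta>]])
  finally show ?thesis using sum_indicator_nonzero_digit_vecs[OF S] by simp
qed

lemma download_xor_scheme:
  assumes S: "S > 0" "S = N + U - 1" and \<theta>: "\<theta> < K"
  shows "download N U K (S - 1) (xor_query_pmf S K) (xor_answer K) \<theta>
    = real S * ((real S ^ K - 1) / real S ^ K)"
proof -
  have "download N U K (S - 1) (xor_query_pmf S K) (xor_answer K) \<theta>
      = (\<Sum>s<S. (real S ^ K - 1) / real S ^ K)"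
    unfolding download_def S(2)[symmetric]
    by (intro sum.cong refl cond_ent_xor_answer[OF S(1) \<theta>]) simp
  then show ?thesis by simp
qed

lemma inverse_geometric_sum:
  assumes S: "S \<ge> 2" and K: "K \<ge> 1"
  shows "real (S - 1) / (real S * ((real S ^ K - 1) / real S ^ K)) = inverse (\<Sum>i<K. 1 / real S ^ i)"
proof -
  define x where "x = real S"
  have x: "x \<ge> 2" using S by (simp add: x_def)
  have "x ^ K \<ge> x" using x K by (metis power_increasing power_one_right one_le_numeral order_trans)
  then have xK: "x ^ K - 1 > 0" using x by simp
  have "(\<Sum>i<K. 1 / x ^ i) = (\<Sum>i<K. (1 / x) ^ i)" by (simp add: power_one_over)
  also have "\<dots> = (1 - (1 / x) ^ K) / (1 - 1 / x)" using x by (simp add: sum_gp_strict)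
  finally have "(\<Sum>i<K. 1 / x ^ i) = (1 - (1 / x) ^ K) / (1 - 1 / x)" .
  moreover have "real (S - 1) = x - 1" using S by (simp add: x_def of_nat_diff)
  moreover have "(x - 1) / (x * ((x ^ K - 1) / x ^ K)) = inverse ((1 - (1 / x) ^ K) / (1 - 1 / x))"
    using x xK by (simp add: field_simps power_one_over)
  ultimately show ?thesis unfolding x_def by simp
qed

lemma mupir_rate_xor:
  assumes S: "S \<ge> 2" "S = N + U - 1" and K: "K \<ge> 1"
  shows "mupir_rate N U K (S - 1) (xor_query_pmf S K) (xor_answer K)
    = inverse (\<Sum>i<K. 1 / real S ^ i)"
proof -
  have "download N U K (S - 1) (xor_query_pmf S K) (xor_answer K) ` {..<K}
      = {real S * ((real S ^ K - 1) / real S ^ K)}"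
    using download_xor_scheme[of S N U] S K by force
  then show ?thesis unfolding mupir_rate_def using inverse_geometric_sum[OF S(1) K] by simp
qed

lemma map_singleton_hd_msg_set: "w \<in> msg_set K 1 \<Longrightarrow> map (\<lambda>b. [b]) (map hd w) = w"
  unfolding msg_set_def by (auto intro!: nth_equalityI simp: length_Suc_conv)

lemma mupir_scheme_download_all:
  assumes "N + U - 1 = 1"
  shows "mupir_scheme N U K 1 (\<lambda>_. return_pmf [0]) (\<lambda>_ _ w. map hd w)"
proof -
  have dec: "[answers 1 (\<lambda>_ _ w. map hd w) q w ! 0 ! \<theta>] = w ! \<theta>"
    if "\<theta> < K" "w \<in> msg_set K 1" for \<theta> q w
  proof -
    have "length w = K" using that(2) by (simp add: msg_set_def)
    then show ?thesis
      using arg_cong[OF map_singleton_hd_msg_set[OF that(2)], of "\<lambda>l. l ! \<theta>"] that(1)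
      by (simp add: answers_def)
  qed
  have "\<exists>dec. \<forall>\<theta><K. \<forall>q\<in>set_pmf (return_pmf [0::nat]). \<forall>w\<in>msg_set K 1.
      dec \<theta> q (answers 1 (\<lambda>_ _ w. map hd w) q w) = w ! \<theta>"
    by (intro exI[of _ "\<lambda>\<theta> q as. [as ! 0 ! \<theta>]"] allI impI ballI) (blast intro: dec)
  then show ?thesis unfolding mupir_scheme_def Let_def assms by (simp add: joint_def)
qed

lemma mupir_rate_download_all:
  assumes S: "N + U - 1 = 1" and K: "K \<ge> 1"
  shows "mupir_rate N U K 1 (\<lambda>_. return_pmf [0]) (\<lambda>_ _ w. map hd w)
    = inverse (\<Sum>i<K. 1 / real (N + U - 1) ^ i)"
proof -
  have "inj_on (map hd) (msg_set K 1)"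
    by (rule inj_on_inverseI[where g="map (\<lambda>b. [b])"]) (rule map_singleton_hd_msg_set)
  then have ent_hd: "ent_rv (msg_dist K 1) (map hd) = real K"
    using ent_rv_eq[of "msg_dist K 1" "\<lambda>w. w" "map hd"] ent_rv_msg_dist[of K 1]
    by (simp add: finite_msg_set inj_on_eq_iff)
  have "download N U K 1 (\<lambda>_. return_pmf [0]) (\<lambda>_ _ w. map hd w) \<theta>
      = cond_ent (pair_pmf (return_pmf [0 :: nat]) (msg_dist K 1)) (\<lambda>z. map hd (snd z)) fst" for \<theta>
    unfolding download_def S joint_def by (simp add: split_beta')
  also have "\<dots> = real K"
    using cond_ent_pair_pmf_fst[of "return_pmf [0 :: nat]" "msg_dist K 1" "\<lambda>_ w. map hd w"] ent_hd
    by (simp add: finite_msg_set ent_rv_def)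
  finally show ?thesis
    using K unfolding mupir_rate_def S
    by (simp add: inverse_eq_divide image_constant_conv lessThan_empty_iff)
qed

lemma mupir_rate_attains_bound:
  assumes S: "N + U - 1 \<ge> 1" and K: "K \<ge> 1"
  shows "\<exists>L Qd ans. mupir_scheme N U K L Qd ans
           \<and> mupir_rate N U K L Qd ans = inverse (\<Sum>i<K. 1 / real (N + U - 1) ^ i)"
proof (cases "N + U - 1 = 1")
  case True
  then show ?thesis using mupir_scheme_download_all[OF True]
    mupir_rate_download_all[OF True K] by blast
next
  case False
  then have S2: "N + U - 1 \<ge> 2" using S by simp
  then show ?thesis using mupir_scheme_xor[OF S2 refl] mupir_rate_xor[OF S2 refl K] by blast
qed

theorem theorem1:
  fixes N U K :: nat
  assumes "N \<ge> 1" and "U \<ge> 1" and "K \<ge> 1"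
  shows "mupir_capacity N U K =
           inverse (\<Sum>i<K. 1 / real (N + U - 1) ^ i)"
proof -
  define C where "C = inverse (\<Sum>i<K. 1 / real (N + U - 1) ^ i)"
  define rates where "rates = {mupir_rate N U K L Qd ans | L Qd ans. mupir_scheme N U K L Qd ans}"
  have S: "N + U - 1 \<ge> 1" using assms by simp
  obtain L Qd ans where "mupir_scheme N U K L Qd ans" and "mupir_rate N U K L Qd ans = C"
    using mupir_rate_attains_bound[OF S assms(3)] unfolding C_def by blast
  then have "C \<in> rates"
    unfolding rates_def by (intro CollectI exI[of _ L] exI[of _ Qd] exI[of _ ans]) simp
  moreover have "r \<le> C" if "r \<in> rates" for r
    using that mupir.rate_le[OF mupir.intro assms(3) S] unfolding rates_def C_def by blast
  ultimately show ?thesis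
    unfolding mupir_capacity_def rates_def[symmetric] C_def by (rule cSup_eq_maximum)
qed

end
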